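(* Let $\sigma_0>0$, let $F$ be an $M\times N$ matrix, let $\mathcal{M}$ be a linear subspace of the space of $M\times N$ matrices, and let $(\alpha_n)$ satisfy $0<\alpha_n\le1$ for all $n$. Let $\Lambda^0=0$ and for $n\ge0$ $$X^{n+1}=\mathfrak{S}_{f_0}\Big(F-\frac{\Lambda^n}{2}\Big),\qquad \Lambda^{n+1}=\Lambda^n+\alpha_nP_{\mathcal{M}^\perp}(X^{n+1}).$$ Then the sequences $(X^n)_{n\ge1}$ and $(\Lambda^n)_{n\ge1}$ are bounded.
   Context: The space of $M\times N$ matrices carries the real inner product $\langle X,Y\rangle=\mathrm{Re}\,\mathrm{tr}(Y^*X)$ with Frobenius norm; $P_{\mathcal{M}^\perp}$ is the orthogonal projection onto $\mathcal{M}^\perp$. For $f:[0,\infty)\to\mathbb{C}$ and a matrix $A=U\Sigma_\phi V^*$ (singular value decomposition with singular values $\phi_j$), $\mathfrak{S}_f(A)=U\Sigma_{f(\phi)}V^*$ replaces each singular value $\phi_j$ by $f(\phi_j)$. Here $f_0(x)=0$ for $x<\sigma_0$ and $f_0(x)=x$ for $x\ge\sigma_0$. *)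

theory Defs
  imports "HOL-Analysis.Analysis"
begin

text \<open>Complex M x N matrices are modelled as complex^'n^'m (M = CARD('m), N = CARD('n)).
  The library norm on this type is the Frobenius norm and the library inner product is
  Re tr(Y^* X).\<close>

definition cvinner :: "complex^'m \<Rightarrow> complex^'m \<Rightarrow> complex" where
  "cvinner x y = (\<Sum>i\<in>UNIV. x$i * cnj (y$i))"

definition orthonormal_vecs :: "nat \<Rightarrow> (nat \<Rightarrow> complex^'m) \<Rightarrow> bool" where
  "orthonormal_vecs r u \<longleftrightarrow>
     (\<forall>j<r. \<forall>k<r. cvinner (u j) (u k) = (if j = k then 1 else 0))"

text \<open>U diag(s) V^*, written column-wise: sum over k of s_k u_k v_k^*, k < min(M,N).\<close>
definition svd_synth :: "nat \<Rightarrow> (nat \<Rightarrow> complex^'m) \<Rightarrow> (nat \<Rightarrow> complex) \<Rightarrow> (nat \<Rightarrow> complex^'n)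
    \<Rightarrow> complex^'n^'m" where
  "svd_synth r u s v = (\<chi> i j. \<Sum>k<r. s k * (u k)$i * cnj ((v k)$j))"

definition is_svd :: "complex^'n^'m \<Rightarrow> (nat \<Rightarrow> complex^'m) \<Rightarrow> (nat \<Rightarrow> real)
    \<Rightarrow> (nat \<Rightarrow> complex^'n) \<Rightarrow> bool" where
  "is_svd A u \<phi> v \<longleftrightarrow>
     (let r = min CARD('m) CARD('n) in
        orthonormal_vecs r u \<and> orthonormal_vecs r v \<and> (\<forall>k<r. 0 \<le> \<phi> k) \<and>
        A = svd_synth r u (\<lambda>k. complex_of_real (\<phi> k)) v)"

text \<open>B = S_f(A) for (some) singular value decomposition of A.\<close>
definition spec_apply :: "(real \<Rightarrow> complex) \<Rightarrow> complex^'n^'m \<Rightarrow> complex^'n^'m \<Rightarrow> bool" where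
  "spec_apply f A B \<longleftrightarrow>
     (\<exists>u \<phi> v. is_svd A u \<phi> v \<and>
        B = svd_synth (min CARD('m) CARD('n)) u (\<lambda>k. f (\<phi> k)) v)"

definition f0 :: "real \<Rightarrow> real \<Rightarrow> complex" where
  "f0 \<sigma>0 x = (if x < \<sigma>0 then 0 else complex_of_real x)"

definition cmat_subspace :: "(complex^'n^'m) set \<Rightarrow> bool" where
  "cmat_subspace S \<longleftrightarrow> subspace S \<and> (\<forall>c::complex. \<forall>x\<in>S. (\<chi> i j. c * x$i$j) \<in> S)"

definition orth_comp :: "'a::real_inner set \<Rightarrow> 'a set" where
  "orth_comp S = {x. \<forall>y\<in>S. inner x y = 0}"

definition proj_perp :: "'a::real_inner set \<Rightarrow> 'a \<Rightarrow> 'a" where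
  "proj_perp S x = (THE p. p \<in> orth_comp S \<and> x - p \<in> S)"

end

theory Submission
  imports Defs
begin

text \<open>Thresholding moves each singular value by at most \<sigma>0 and the rank-one terms of
  an SVD have unit norm, so X(n+1) = F - \<Lambda>(n)/2 + E(n) with norm E(n) \<le> min(M,N) \<sigma>0.
  By induction \<Lambda>(n) is orthogonal to \<M>, hence the projection P onto the orthogonal
  complement of \<M> gives P X(n+1) = P (F + E(n)) - \<Lambda>(n)/2, and
  \<Lambda>(n+1) = (1 - \<alpha>(n)/2) \<Lambda>(n) + (\<alpha>(n)/2) 2 P (F + E(n)) is a convex combination of two
  points of the ball of radius 2(norm F + min(M,N) \<sigma>0). So \<Lambda>(n) stays in that ball,
  and then X(n+1) is bounded as well.\<close>

lemma orth_comp_eq_orthogonal_comp: "orth_comp S = orthogonal_comp S"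
  by (auto simp: orth_comp_def orthogonal_comp_def orthogonal_def inner_commute)

lemma subspace_orth_comp: "subspace (orth_comp S)"
  by (simp add: orth_comp_eq_orthogonal_comp subspace_orthogonal_comp)

lemma proj_perp_eqI:
  fixes S :: "'a::real_inner set"
  assumes "subspace S" "p \<in> orth_comp S" "x - p \<in> S"
  shows "proj_perp S x = p"
  unfolding proj_perp_def
proof (rule the_equality)
  fix q assume q: "q \<in> orth_comp S \<and> x - q \<in> S"
  have "p - q = (x - q) - (x - p)" by simp
  hence "p - q \<in> S" using q assms by (metis subspace_diff)
  moreover have "p - q \<in> orth_comp S"
    using q assms(2) subspace_orth_comp by (metis subspace_diff)
  ultimately have "inner (p - q) (p - q) = 0" by (simp add: orth_comp_def)
  thus "q = p" by simp
qed (use assms in blast)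

lemma proj_perp_in_orth_comp:
  fixes S :: "'a::euclidean_space set"
  assumes "subspace S"
  shows "proj_perp S x \<in> orth_comp S" and "x - proj_perp S x \<in> S"
proof -
  obtain y z where "y \<in> span S" "\<And>w. w \<in> span S \<Longrightarrow> orthogonal z w" "x = y + z"
    using orthogonal_subspace_decomp_exists[of S x] by blast
  moreover have "span S = S" using assms by (simp add: span_eq_iff)
  ultimately have "z \<in> orth_comp S" "x - z \<in> S"
    by (auto simp: orth_comp_def orthogonal_def)
  with proj_perp_eqI[OF assms] show "proj_perp S x \<in> orth_comp S" "x - proj_perp S x \<in> S"
    by simp_all
qed

lemma norm_proj_perp_le:
  fixes S :: "'a::euclidean_space set"
  assumes "subspace S"
  shows "norm (proj_perp S x) \<le> norm x"
proof -
  let ?p = "proj_perp S x"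
  have "inner ?p (x - ?p) = 0"
    using proj_perp_in_orth_comp[OF assms] by (simp add: orth_comp_def)
  hence "norm x ^ 2 = norm ?p ^ 2 + norm (x - ?p) ^ 2"
    using norm_add_Pythagorean[of ?p "x - ?p"] by (simp add: orthogonal_def)
  hence "norm ?p ^ 2 \<le> norm x ^ 2" by simp
  thus ?thesis by (simp add: power2_le_iff_abs_le)
qed

lemma proj_perp_add_orth_comp:
  fixes S :: "'a::euclidean_space set"
  assumes "subspace S" "p \<in> orth_comp S"
  shows "proj_perp S (x + p) = proj_perp S x + p"
proof (rule proj_perp_eqI[OF assms(1)])
  show "proj_perp S x + p \<in> orth_comp S"
    using proj_perp_in_orth_comp(1)[OF assms(1)] assms(2) subspace_orth_comp
    by (metis subspace_add)
  show "x + p - (proj_perp S x + p) \<in> S"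
    using proj_perp_in_orth_comp(2)[OF assms(1)] by simp
qed

lemma cvinner_self: "cvinner x x = complex_of_real (norm x ^ 2)"
proof -
  have "norm x ^ 2 = (\<Sum>i\<in>UNIV. norm (x$i) ^ 2)"
    by (simp add: norm_vec_def L2_set_def sum_nonneg)
  moreover have "cvinner x x = (\<Sum>i\<in>UNIV. complex_of_real (norm (x$i) ^ 2))"
    unfolding cvinner_def by (simp only: complex_norm_square)
  ultimately show ?thesis by (simp only: of_real_sum)
qed

lemma norm_eq_1_if_orthonormal_vecs:
  assumes "orthonormal_vecs r u" "k < r"
  shows "norm (u k) = 1"
proof -
  have "cvinner (u k) (u k) = 1" using assms by (simp add: orthonormal_vecs_def)
  hence "norm (u k) ^ 2 = 1" by (simp only: cvinner_self of_real_eq_1_iff)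
  thus ?thesis using norm_ge_zero[of "u k"] by (auto simp: power2_eq_1_iff)
qed

lemma norm_rank_one:
  fixes x :: "complex^'m" and y :: "complex^'n"
  shows "norm (\<chi> i j. c * x$i * cnj (y$j)) = norm c * norm x * norm y"
proof -
  have row: "norm (\<chi> j. c * x$i * cnj (y$j)) = norm c * norm (x$i) * norm y" for i
    by (simp add: norm_vec_def norm_mult L2_set_right_distrib)
  have "norm (\<chi> i j. c * x$i * cnj (y$j)) = L2_set (\<lambda>i. norm (\<chi> j. c * x$i * cnj (y$j))) UNIV"
    by (subst norm_vec_def) simp
  also have "\<dots> = L2_set (\<lambda>i. norm c * norm y * norm (x$i)) UNIV"
    unfolding row by (simp add: mult_ac)
  also have "\<dots> = norm c * norm y * norm x"
    by (simp add: L2_set_right_distrib norm_vec_def)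
  finally show ?thesis by (simp add: mult_ac)
qed

lemma norm_svd_synth_le:
  "norm (svd_synth r u s v) \<le> (\<Sum>k<r. norm (s k) * norm (u k) * norm (v k))"
proof -
  have "svd_synth r u s v = (\<Sum>k<r. \<chi> i j. s k * (u k)$i * cnj ((v k)$j))"
    by (simp add: svd_synth_def vec_eq_iff sum_component)
  also have "norm \<dots> \<le> (\<Sum>k<r. norm (\<chi> i j. s k * (u k)$i * cnj ((v k)$j)))"
    by (rule norm_sum)
  finally show ?thesis by (simp only: norm_rank_one)
qed

lemma svd_synth_diff:
  "svd_synth r u s v - svd_synth r u t v = svd_synth r u (\<lambda>k. s k - t k) v"
  by (simp add: svd_synth_def vec_eq_iff sum_subtractf algebra_simps)

lemma spec_apply_dist_le:
  fixes A B :: "complex^'n^'m"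
  assumes "spec_apply f A B" and "\<And>x. 0 \<le> x \<Longrightarrow> norm (f x - complex_of_real x) \<le> \<delta>"
  shows "norm (B - A) \<le> real (min CARD('m) CARD('n)) * \<delta>"
proof -
  let ?r = "min CARD('m) CARD('n)"
  obtain u \<phi> v where svd: "is_svd A u \<phi> v" and B: "B = svd_synth ?r u (\<lambda>k. f (\<phi> k)) v"
    using assms(1) unfolding spec_apply_def by blast
  have u: "orthonormal_vecs ?r u" and v: "orthonormal_vecs ?r v" and \<phi>: "\<forall>k<?r. 0 \<le> \<phi> k"
    and A: "A = svd_synth ?r u (\<lambda>k. complex_of_real (\<phi> k)) v"
    using svd unfolding is_svd_def Let_def by auto
  have "B - A = svd_synth ?r u (\<lambda>k. f (\<phi> k) - complex_of_real (\<phi> k)) v"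
    unfolding A B by (rule svd_synth_diff)
  also have "norm \<dots> \<le> (\<Sum>k<?r. \<delta>)"
  proof (rule order_trans[OF norm_svd_synth_le], rule sum_mono)
    fix k assume "k \<in> {..<?r}"
    thus "norm (f (\<phi> k) - complex_of_real (\<phi> k)) * norm (u k) * norm (v k) \<le> \<delta>"
      using u v \<phi> assms(2) by (simp add: norm_eq_1_if_orthonormal_vecs)
  qed
  finally show ?thesis by simp
qed

lemma norm_f0_diff_le:
  assumes "0 \<le> \<sigma>0" "0 \<le> x"
  shows "norm (f0 \<sigma>0 x - complex_of_real x) \<le> \<sigma>0"
  using assms by (simp add: f0_def)

lemma multiplier_in_orth_comp_cball:
  fixes S :: "'a::euclidean_space set" and F :: 'a and X \<Lambda> :: "nat \<Rightarrow> 'a"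
  assumes S: "subspace S"
    and \<alpha>: "\<And>n. 0 \<le> \<alpha> n \<and> \<alpha> n \<le> 2"
    and init: "\<Lambda> 0 = 0"
    and err: "\<And>n. norm (X (Suc n) - (F - (1/2) *\<^sub>R \<Lambda> n)) \<le> c"
    and step: "\<And>n. \<Lambda> (Suc n) = \<Lambda> n + \<alpha> n *\<^sub>R proj_perp S (X (Suc n))"
  shows "\<Lambda> n \<in> orth_comp S \<inter> cball 0 (2 * (norm F + c))"
proof (induction n)
  case 0
  have "0 \<le> c" using err[of 0] norm_ge_zero order_trans by blast
  thus ?case by (simp add: init subspace_0[OF subspace_orth_comp])
next
  case (Suc n)
  define K where "K = orth_comp S \<inter> cball 0 (2 * (norm F + c))"
  define E where "E = X (Suc n) - (F - (1/2) *\<^sub>R \<Lambda> n)"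
  let ?P = "proj_perp S (F + E)"
  have X: "X (Suc n) = (F + E) + (- (1/2)) *\<^sub>R \<Lambda> n" by (simp add: E_def)
  have "- (1/2) *\<^sub>R \<Lambda> n \<in> orth_comp S"
    using Suc.IH subspace_orth_comp subspace_scale by blast
  hence PX: "proj_perp S (X (Suc n)) = ?P + (- (1/2)) *\<^sub>R \<Lambda> n"
    unfolding X by (rule proj_perp_add_orth_comp[OF S])
  have \<Lambda>: "\<Lambda> (Suc n) = (1 - \<alpha> n / 2) *\<^sub>R \<Lambda> n + (\<alpha> n / 2) *\<^sub>R (2 *\<^sub>R ?P)"
    unfolding step PX by (simp add: algebra_simps)
  have "norm (2 *\<^sub>R ?P) \<le> 2 * (norm F + c)"
    using norm_proj_perp_le[OF S, of "F + E"] norm_triangle_ineq[of F E] err[of n]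
    by (simp add: E_def)
  moreover have "2 *\<^sub>R ?P \<in> orth_comp S"
    using proj_perp_in_orth_comp(1)[OF S] subspace_orth_comp subspace_scale by blast
  ultimately have "2 *\<^sub>R ?P \<in> K" by (simp add: K_def)
  moreover have "convex K"
    by (simp add: K_def convex_Int subspace_imp_convex subspace_orth_comp)
  ultimately have "\<Lambda> (Suc n) \<in> K"
    unfolding \<Lambda> using Suc.IH \<alpha>[of n] by (intro convexD) (auto simp: K_def)
  thus ?case by (simp add: K_def)
qed

theorem proposition5:
  fixes \<sigma>0 :: real and F :: "complex^'n^'m" and \<M> :: "(complex^'n^'m) set"
    and \<alpha> :: "nat \<Rightarrow> real" and X \<Lambda> :: "nat \<Rightarrow> complex^'n^'m"
  assumes "\<sigma>0 > 0"
    and "cmat_subspace \<M>"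
    and "\<And>n. 0 < \<alpha> n \<and> \<alpha> n \<le> 1"
    and "\<Lambda> 0 = 0"
    and "\<And>n. spec_apply (f0 \<sigma>0) (F - (1/2) *\<^sub>R \<Lambda> n) (X (Suc n))"
    and "\<And>n. \<Lambda> (Suc n) = \<Lambda> n + \<alpha> n *\<^sub>R proj_perp \<M> (X (Suc n))"
  shows "bounded (X ` {1..}) \<and> bounded (\<Lambda> ` {1..})"
proof -
  define c where "c = real (min CARD('m) CARD('n)) * \<sigma>0"
  define R where "R = 2 * (norm F + c)"
  have err: "norm (X (Suc n) - (F - (1/2) *\<^sub>R \<Lambda> n)) \<le> c" for n
    unfolding c_def using assms(1,5) norm_f0_diff_le by (intro spec_apply_dist_le) auto
  have \<M>: "subspace \<M>" using assms(2) by (simp add: cmat_subspace_def)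
  have \<alpha>: "0 \<le> \<alpha> n \<and> \<alpha> n \<le> 2" for n using assms(3)[of n] by simp
  have "\<Lambda> n \<in> orth_comp \<M> \<inter> cball 0 R" for n
    unfolding R_def using \<M> \<alpha> assms(4) err assms(6) by (rule multiplier_in_orth_comp_cball)
  hence \<Lambda>: "norm (\<Lambda> n) \<le> R" for n by simp
  have "norm (X (Suc n)) \<le> norm F + R / 2 + c" for n
    using norm_triangle_ineq[of "X (Suc n) - (F - (1/2) *\<^sub>R \<Lambda> n)" "F - (1/2) *\<^sub>R \<Lambda> n"]
      norm_triangle_ineq4[of F "(1/2) *\<^sub>R \<Lambda> n"] err[of n] \<Lambda>[of n] by simp
  hence "X ` {1..} \<subseteq> cball 0 (norm F + R / 2 + c)"
    by (auto simp: One_nat_def dest!: Suc_le_D)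
  moreover have "\<Lambda> ` {1..} \<subseteq> cball 0 R" using \<Lambda> by auto
  ultimately show ?thesis by (meson bounded_cball bounded_subset)
qed

end
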